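(* Let $a\le s\le r$ be positive integers with $s\mid r$, and let $\gamma\in B_a$ (viewed in $B_s\subseteq B_r$ via the standard inclusions). Then $\widehat{\gamma[1,r]^s}=\widehat{\gamma[1,s]^r}$, where the left closure is taken in $B_r$ and the right in $B_s$. Consequently, for a T-link with $r_{k-1}\le s_k\le r_k$ and $s_k\mid r_k$, $$T((r_1,s_1),\dots,(r_{k-1},s_{k-1}),(r_k,s_k))=T((r_1,s_1),\dots,(r_{k-1},s_{k-1}),(s_k,r_k)).$$
   Context: $B_n$ is the braid group on $n$ strands with generators $\sigma_1,\dots,\sigma_{n-1}$; $\widehat\beta$ is the closure; $[1,n]=\sigma_1\sigma_2\cdots\sigma_{n-1}$. A T-link $T((r_1,s_1),\dots,(r_k,s_k))$, with integers $2\le r_1\le\dots\le r_k$ and $s_i>0$, is the closure of $[1,r_1]^{s_1}\cdots[1,r_k]^{s_k}\in B_{r_k}$. *)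

theory Defs
  imports Main
begin

text \<open>Braid words: (i, True) is the generator sigma_i, (i, False) its inverse (i \<ge> 1).\<close>
type_synonym bword = "(nat \<times> bool) list"

definition valid_word :: "nat \<Rightarrow> bword \<Rightarrow> bool" where
  "valid_word n w \<longleftrightarrow> (\<forall>(i, b) \<in> set w. 1 \<le> i \<and> i < n)"

definition inv_word :: "bword \<Rightarrow> bword" where
  "inv_word w = rev (map (\<lambda>(i, b). (i, \<not> b)) w)"

inductive braid_eq :: "nat \<Rightarrow> bword \<Rightarrow> bword \<Rightarrow> bool" for n :: nat where
  refl: "valid_word n w \<Longrightarrow> braid_eq n w w"
| sym: "braid_eq n w v \<Longrightarrow> braid_eq n v w"
| trans: "braid_eq n u v \<Longrightarrow> braid_eq n v w \<Longrightarrow> braid_eq n u w"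
| cancel: "valid_word n u \<Longrightarrow> valid_word n v \<Longrightarrow> 1 \<le> i \<Longrightarrow> i < n \<Longrightarrow>
     braid_eq n (u @ [(i, b), (i, \<not> b)] @ v) (u @ v)"
| far_comm: "valid_word n u \<Longrightarrow> valid_word n v \<Longrightarrow> 1 \<le> i \<Longrightarrow> i + 2 \<le> j \<Longrightarrow> j < n \<Longrightarrow>
     braid_eq n (u @ [(i, True), (j, True)] @ v) (u @ [(j, True), (i, True)] @ v)"
| braid_rel: "valid_word n u \<Longrightarrow> valid_word n v \<Longrightarrow> 1 \<le> i \<Longrightarrow> i + 1 < n \<Longrightarrow>
     braid_eq n (u @ [(i, True), (Suc i, True), (i, True)] @ v)
                (u @ [(Suc i, True), (i, True), (Suc i, True)] @ v)"

text \<open>Markov equivalence of braids (n strands, word): equality of braid closures as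
  oriented links (Markov's theorem). Generated by braid-group equality, conjugation
  and (de)stabilisation.\<close>
inductive markov_eq :: "nat \<times> bword \<Rightarrow> nat \<times> bword \<Rightarrow> bool" where
  group: "braid_eq n w v \<Longrightarrow> markov_eq (n, w) (n, v)"
| conj: "valid_word n w \<Longrightarrow> valid_word n g \<Longrightarrow> markov_eq (n, w) (n, g @ w @ inv_word g)"
| stab: "1 \<le> n \<Longrightarrow> valid_word n w \<Longrightarrow> markov_eq (n, w) (Suc n, w @ [(n, b)])"
| sym: "markov_eq x y \<Longrightarrow> markov_eq y x"
| trans: "markov_eq x y \<Longrightarrow> markov_eq y z \<Longrightarrow> markov_eq x z"

text \<open>The closure of a braid in B_n, represented by its link type (Markov class).\<close>
definition closure :: "nat \<Rightarrow> bword \<Rightarrow> (nat \<times> bword) set" where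
  "closure n w = {x. markov_eq (n, w) x}"

text \<open>[1,n] = sigma_1 sigma_2 ... sigma_(n-1)\<close>
definition full_word :: "nat \<Rightarrow> bword" where
  "full_word n = map (\<lambda>i. (i, True)) [1..<n]"

definition pow_word :: "bword \<Rightarrow> nat \<Rightarrow> bword" where
  "pow_word w k = concat (replicate k w)"

definition is_T_data :: "(nat \<times> nat) list \<Rightarrow> bool" where
  "is_T_data ps \<longleftrightarrow> ps \<noteq> [] \<and> sorted (map fst ps) \<and> (\<forall>(r, s) \<in> set ps. 2 \<le> r \<and> 0 < s)"

definition T_link :: "(nat \<times> nat) list \<Rightarrow> (nat \<times> bword) set" where
  "T_link ps = closure (fst (last ps)) (concat (map (\<lambda>(r, s). pow_word (full_word r) s) ps))"

end

theory Submission
  imports Defs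
begin

text \<open>Let \<open>\<delta>_s = \<sigma>_{s-1}\<cdots>\<sigma>_1\<close>. Sliding generators to the right gives
  \<open>[1,r]^s = [1,s]^s E\<close> for the staircase \<open>E = \<Prod>_{k=s+1..r} \<sigma>_{k-1}\<cdots>\<sigma>_{k-s}\<close>.
  In the closure of \<open>\<beta> E\<close> the outermost strand occurs only in the last stair; conjugating
  the rest of that stair away and destabilising removes the strand and leaves one copy of
  \<open>\<delta>_s\<close>, which commutes past the remaining staircase to the front. Removing all \<open>r - s\<close>
  outer strands turns the closure of \<open>\<gamma>[1,r]^s\<close> into that of \<open>\<gamma>[1,s]^s \<delta>_s^{r-s}\<close> in
  \<open>B_s\<close>. Finally \<open>\<delta>_s^s = [1,s]^s\<close>, both being the full twist, so \<open>s | r\<close> gives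
  \<open>\<delta>_s^{r-s} = [1,s]^{r-s}\<close>.\<close>

lemma valid_word_Nil[simp]: "valid_word n []"
  by (simp add: valid_word_def)

lemma valid_word_append[simp]: "valid_word n (u @ v) \<longleftrightarrow> valid_word n u \<and> valid_word n v"
  by (auto simp: valid_word_def)

lemma valid_word_Cons[simp]: "valid_word n ((i, b) # v) \<longleftrightarrow> 1 \<le> i \<and> i < n \<and> valid_word n v"
  by (auto simp: valid_word_def)

lemma valid_word_rev[simp]: "valid_word n (rev v) \<longleftrightarrow> valid_word n v"
  by (auto simp: valid_word_def)

lemma valid_word_mono: "valid_word n w \<Longrightarrow> n \<le> m \<Longrightarrow> valid_word m w"
  by (auto simp: valid_word_def)

lemma valid_word_concat: "(\<forall>w\<in>set ws. valid_word n w) \<Longrightarrow> valid_word n (concat ws)"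
  by (induction ws) auto

lemma valid_word_pow_word: "valid_word n w \<Longrightarrow> valid_word n (pow_word w k)"
  unfolding pow_word_def by (rule valid_word_concat) auto

lemma pow_word_0[simp]: "pow_word w 0 = []"
  by (simp add: pow_word_def)

lemma pow_word_Nil[simp]: "pow_word [] k = []"
  by (simp add: pow_word_def)

lemma pow_word_Suc: "pow_word w (Suc k) = w @ pow_word w k"
  by (simp add: pow_word_def)

lemma pow_word_Suc_right: "pow_word w (Suc k) = pow_word w k @ w"
  by (induction k) (simp_all add: pow_word_def)

lemma pow_word_add: "pow_word w (a + b) = pow_word w a @ pow_word w b"
  by (simp add: pow_word_def replicate_add)

lemma pow_word_mult: "pow_word w (a * b) = pow_word (pow_word w a) b"
  by (induction b) (simp_all add: pow_word_add pow_word_Suc)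

lemma rev_pow_word: "rev (pow_word w k) = pow_word (rev w) k"
  by (simp add: pow_word_def rev_concat)

lemma braid_eq_valid_word: "braid_eq n w v \<Longrightarrow> valid_word n w \<and> valid_word n v"
  by (induction rule: braid_eq.induct) auto

lemma braid_eq_append_cong:
  "braid_eq n w v \<Longrightarrow> valid_word n x \<Longrightarrow> valid_word n y \<Longrightarrow> braid_eq n (x @ w @ y) (x @ v @ y)"
proof (induction rule: braid_eq.induct)
  case (refl w) then show ?case by (intro braid_eq.refl) simp
next
  case (sym w v) then show ?case by (blast intro: braid_eq.sym)
next
  case (trans u v w) then show ?case by (blast intro: braid_eq.trans)
next
  case (cancel u v i b)
  have "braid_eq n ((x @ u) @ [(i, b), (i, \<not> b)] @ (v @ y)) ((x @ u) @ (v @ y))"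
    using cancel by (intro braid_eq.cancel) auto
  then show ?case by simp
next
  case (far_comm u v i j)
  have "braid_eq n ((x @ u) @ [(i, True), (j, True)] @ (v @ y))
                   ((x @ u) @ [(j, True), (i, True)] @ (v @ y))"
    using far_comm by (intro braid_eq.far_comm) auto
  then show ?case by simp
next
  case (braid_rel u v i)
  have "braid_eq n ((x @ u) @ [(i, True), (Suc i, True), (i, True)] @ (v @ y))
                   ((x @ u) @ [(Suc i, True), (i, True), (Suc i, True)] @ (v @ y))"
    using braid_rel by (intro braid_eq.braid_rel) auto
  then show ?case by simp
qed

lemma braid_eq_append_left: "braid_eq n w v \<Longrightarrow> valid_word n x \<Longrightarrow> braid_eq n (x @ w) (x @ v)"
  using braid_eq_append_cong[of n w v x "[]"] by simp

lemma braid_eq_append_right: "braid_eq n w v \<Longrightarrow> valid_word n y \<Longrightarrow> braid_eq n (w @ y) (v @ y)"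
  using braid_eq_append_cong[of n w v "[]" y] by simp

lemma braid_eq_append: "braid_eq n w v \<Longrightarrow> braid_eq n w' v' \<Longrightarrow> braid_eq n (w @ w') (v @ v')"
  by (meson braid_eq_append_left braid_eq_append_right braid_eq_valid_word braid_eq.trans)

lemma braid_eq_pow_word: "braid_eq n w v \<Longrightarrow> braid_eq n (pow_word w k) (pow_word v k)"
  by (induction k) (simp_all add: pow_word_Suc braid_eq_append braid_eq.refl)

lemma braid_eq_mono: "braid_eq n w v \<Longrightarrow> n \<le> m \<Longrightarrow> braid_eq m w v"
proof (induction rule: braid_eq.induct)
  case (refl w) then show ?case using valid_word_mono braid_eq.refl by blast
next
  case (sym w v) then show ?case by (blast intro: braid_eq.sym)
next
  case (trans u v w) then show ?case by (blast intro: braid_eq.trans)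
next
  case (cancel u v i b) then show ?case
    by (intro braid_eq.cancel) (auto intro: valid_word_mono)
next
  case (far_comm u v i j) then show ?case
    by (intro braid_eq.far_comm) (auto intro: valid_word_mono)
next
  case (braid_rel u v i) then show ?case
    by (intro braid_eq.braid_rel) (auto intro: valid_word_mono)
qed

lemma braid_eq_rev: "braid_eq n w v \<Longrightarrow> braid_eq n (rev w) (rev v)"
proof (induction rule: braid_eq.induct)
  case (refl w) then show ?case by (intro braid_eq.refl) simp
next
  case (sym w v) then show ?case by (blast intro: braid_eq.sym)
next
  case (trans u v w) then show ?case by (blast intro: braid_eq.trans)
next
  case (cancel u v i b)
  have "braid_eq n (rev v @ [(i, \<not> b), (i, \<not> \<not> b)] @ rev u) (rev v @ rev u)"
    using cancel by (intro braid_eq.cancel) auto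
  then show ?case by simp
next
  case (far_comm u v i j)
  have "braid_eq n (rev v @ [(i, True), (j, True)] @ rev u) (rev v @ [(j, True), (i, True)] @ rev u)"
    using far_comm by (intro braid_eq.far_comm) auto
  then show ?case by (simp add: braid_eq.sym)
next
  case (braid_rel u v i)
  have "braid_eq n (rev v @ [(i, True), (Suc i, True), (i, True)] @ rev u)
                   (rev v @ [(Suc i, True), (i, True), (Suc i, True)] @ rev u)"
    using braid_rel by (intro braid_eq.braid_rel) auto
  then show ?case by simp
qed

declare braid_eq.trans[trans]

section \<open>Markov moves\<close>

lemma closure_eq_if_markov_eq: "markov_eq (n, w) (m, v) \<Longrightarrow> closure n w = closure m v"
  unfolding closure_def by (auto intro: markov_eq.trans markov_eq.sym)

lemma braid_eq_cancel_inv_word: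
  assumes "valid_word n g" "valid_word n x" "valid_word n y"
  shows "braid_eq n (x @ g @ inv_word g @ y) (x @ y)"
  using assms
proof (induction g arbitrary: x y)
  case Nil then show ?case by (simp add: braid_eq.refl inv_word_def)
next
  case (Cons c g)
  obtain i b where c: "c = (i, b)"
    by fastforce
  have "braid_eq n ((x @ [c]) @ g @ inv_word g @ ((i, \<not> b) # y)) ((x @ [c]) @ ((i, \<not> b) # y))"
    using Cons c by (intro Cons.IH) auto
  moreover have "braid_eq n (x @ [(i, b), (i, \<not> b)] @ y) (x @ y)"
    using Cons c by (intro braid_eq.cancel) auto
  moreover have "inv_word (c # g) = inv_word g @ [(i, \<not> b)]"
    by (simp add: inv_word_def c)
  ultimately show ?case
    using c by (auto intro: braid_eq.trans)
qed

lemma closure_eq_if_braid_eq: "braid_eq n w v \<Longrightarrow> closure n w = closure n v"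
  by (intro closure_eq_if_markov_eq markov_eq.group)

lemma closure_append_commute:
  assumes "valid_word n u" "valid_word n v"
  shows "closure n (u @ v) = closure n (v @ u)"
proof -
  have "markov_eq (n, u @ v) (n, v @ (u @ v) @ inv_word v)"
    using assms by (intro markov_eq.conj) auto
  moreover have "braid_eq n ((v @ u) @ v @ inv_word v @ []) ((v @ u) @ [])"
    using assms by (intro braid_eq_cancel_inv_word) auto
  ultimately have "markov_eq (n, u @ v) (n, v @ u)"
    by (auto intro: markov_eq.trans markov_eq.group)
  then show ?thesis by (rule closure_eq_if_markov_eq)
qed

lemma closure_destabilise:
  "1 \<le> n \<Longrightarrow> valid_word n w \<Longrightarrow> closure (Suc n) (w @ [(n, True)]) = closure n w"
  by (metis closure_eq_if_markov_eq markov_eq.stab markov_eq.sym)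

section \<open>Positive words\<close>

definition pos_word :: "nat list \<Rightarrow> bword" where
  "pos_word xs = map (\<lambda>j. (j, True)) xs"

definition asc_word :: "nat \<Rightarrow> nat \<Rightarrow> bword" where
  "asc_word a b = pos_word [a..<b]"

definition desc_word :: "nat \<Rightarrow> nat \<Rightarrow> bword" where
  "desc_word a b = pos_word (rev [a..<b])"

lemma pos_word_simps[simp]:
  "pos_word [] = []"
  "pos_word (i # xs) = (i, True) # pos_word xs"
  "pos_word (xs @ ys) = pos_word xs @ pos_word ys"
  "rev (pos_word xs) = pos_word (rev xs)"
  by (simp_all add: pos_word_def rev_map)

lemma valid_word_pos_word[simp]: "valid_word n (pos_word xs) \<longleftrightarrow> (\<forall>i\<in>set xs. 1 \<le> i \<and> i < n)"
  by (induction xs) auto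

lemma valid_word_asc_word: "1 \<le> a \<Longrightarrow> b \<le> n \<Longrightarrow> valid_word n (asc_word a b)"
  by (auto simp: asc_word_def)

lemma valid_word_desc_word: "1 \<le> a \<Longrightarrow> b \<le> n \<Longrightarrow> valid_word n (desc_word a b)"
  by (auto simp: desc_word_def)

lemma full_word_eq_asc_word: "full_word n = asc_word 1 n"
  by (simp add: full_word_def asc_word_def pos_word_def)

lemma rev_asc_word[simp]: "rev (asc_word a b) = desc_word a b"
  and rev_desc_word[simp]: "rev (desc_word a b) = asc_word a b"
  by (simp_all add: asc_word_def desc_word_def)

lemma asc_word_split: "a \<le> b \<Longrightarrow> b \<le> c \<Longrightarrow> asc_word a c = asc_word a b @ asc_word b c"
  using upt_add_eq_append[of a b "c - b"] by (simp add: asc_word_def)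

lemma desc_word_split: "a \<le> b \<Longrightarrow> b \<le> c \<Longrightarrow> desc_word a c = desc_word b c @ desc_word a b"
  using upt_add_eq_append[of a b "c - b"] by (simp add: desc_word_def)

lemma asc_word_Suc: "a \<le> b \<Longrightarrow> asc_word a (Suc b) = asc_word a b @ [(b, True)]"
  by (simp add: asc_word_def)

lemma desc_word_Suc: "a \<le> b \<Longrightarrow> desc_word a (Suc b) = (b, True) # desc_word a b"
  by (simp add: desc_word_def)

lemma asc_word_empty[simp]: "asc_word a a = []"
  and desc_word_empty[simp]: "desc_word a a = []"
  by (simp_all add: asc_word_def desc_word_def)

lemma braid_eq_gen_commute_far:
  assumes "1 \<le> i" "i < n" "\<forall>j\<in>set js. 1 \<le> j \<and> j < n \<and> (i + 2 \<le> j \<or> j + 2 \<le> i)"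
  shows "braid_eq n ((i, True) # pos_word js) (pos_word js @ [(i, True)])"
  using assms
proof (induction js)
  case Nil then show ?case by (simp add: braid_eq.refl)
next
  case (Cons j js)
  have "braid_eq n ([] @ [(i, True), (j, True)] @ pos_word js)
                   ([] @ [(j, True), (i, True)] @ pos_word js)"
  proof (cases "i + 2 \<le> j")
    case True then show ?thesis using Cons.prems by (intro braid_eq.far_comm) auto
  next
    case False then show ?thesis
      using Cons.prems by (intro braid_eq.sym[OF braid_eq.far_comm]) auto
  qed
  moreover have "braid_eq n ([(j, True)] @ ((i, True) # pos_word js))
                            ([(j, True)] @ (pos_word js @ [(i, True)]))"
    using Cons by (intro braid_eq_append_left) auto
  ultimately show ?case by (auto intro: braid_eq.trans)
qed

lemma braid_eq_pos_words_commute_far: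
  assumes "\<forall>i\<in>set xs. 1 \<le> i \<and> i < n" "\<forall>j\<in>set js. 1 \<le> j \<and> j < n"
    and "\<forall>i\<in>set xs. \<forall>j\<in>set js. i + 2 \<le> j \<or> j + 2 \<le> i"
  shows "braid_eq n (pos_word xs @ pos_word js) (pos_word js @ pos_word xs)"
  using assms
proof (induction xs)
  case Nil then show ?case by (simp add: braid_eq.refl)
next
  case (Cons i xs)
  have "braid_eq n ([(i, True)] @ (pos_word xs @ pos_word js))
                   ([(i, True)] @ (pos_word js @ pos_word xs))"
    using Cons by (intro braid_eq_append_left) auto
  moreover have "braid_eq n (((i, True) # pos_word js) @ pos_word xs)
                            ((pos_word js @ [(i, True)]) @ pos_word xs)"
    using Cons.prems by (intro braid_eq_append_right braid_eq_gen_commute_far) auto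
  ultimately show ?case by (auto intro: braid_eq.trans)
qed

lemma braid_eq_desc_asc_word:
  assumes "1 \<le> b" "b \<le> e"
  shows "braid_eq (Suc e) (desc_word (Suc b) (Suc e) @ asc_word b (Suc e))
                          (asc_word b e @ desc_word b (Suc e))"
  using assms(2)
proof (induction e rule: dec_induct)
  case base
  then show ?case using assms by (simp add: asc_word_Suc desc_word_Suc braid_eq.refl)
next
  case (step e)
  let ?c = "Suc e" and ?A = "pos_word [b..<e]" and ?D = "pos_word (rev [b..<e])"
  have valid: "valid_word (Suc ?c) ?A" "valid_word (Suc ?c) ?D"
    using assms by auto
  have "desc_word (Suc b) (Suc ?c) @ asc_word b (Suc ?c)
      = [(?c, True)] @ (desc_word (Suc b) ?c @ asc_word b ?c) @ [(?c, True)]"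
    using step.hyps by (simp add: desc_word_Suc asc_word_Suc)
  also have "braid_eq (Suc ?c) \<dots> ([(?c, True)] @ (asc_word b e @ desc_word b ?c) @ [(?c, True)])"
    using braid_eq_mono[OF step.IH, of "Suc ?c"] by (intro braid_eq_append_cong) auto
  also have "\<dots> = ((?c, True) # ?A) @ [(e, True)] @ (?D @ [(?c, True)])"
    using step.hyps by (simp add: desc_word_Suc asc_word_def desc_word_def)
  also have "braid_eq (Suc ?c) \<dots> ((?A @ [(?c, True)]) @ [(e, True)] @ (?D @ [(?c, True)]))"
    using assms step.hyps by (intro braid_eq_append_right braid_eq_gen_commute_far) auto
  also have "braid_eq (Suc ?c) \<dots> ((?A @ [(?c, True)]) @ [(e, True)] @ ([(?c, True)] @ ?D))"
  proof -
    have "braid_eq (Suc ?c) ((?c, True) # ?D) (?D @ [(?c, True)])"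
      using assms step.hyps by (intro braid_eq_gen_commute_far) auto
    from braid_eq.sym[OF this]
    have "braid_eq (Suc ?c) (((?A @ [(?c, True)]) @ [(e, True)]) @ (?D @ [(?c, True)]))
                            (((?A @ [(?c, True)]) @ [(e, True)]) @ ((?c, True) # ?D))"
      using assms step.hyps by (intro braid_eq_append_left) auto
    then show ?thesis by simp
  qed
  also have "\<dots> = ?A @ [(?c, True), (e, True), (?c, True)] @ ?D"
    by simp
  also have "braid_eq (Suc ?c) \<dots> (?A @ [(e, True), (?c, True), (e, True)] @ ?D)"
    using assms step.hyps valid by (intro braid_eq.sym[OF braid_eq.braid_rel]) auto
  also have "\<dots> = asc_word b ?c @ desc_word b (Suc ?c)"
    using step.hyps by (simp add: asc_word_Suc desc_word_Suc asc_word_def desc_word_def)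
  finally show ?case .
qed

lemma braid_eq_desc_word_asc_word_1:
  assumes "2 \<le> a" "a \<le> n"
  shows "braid_eq n (desc_word a n @ asc_word 1 n) (asc_word 1 (n - 1) @ desc_word (a - 1) n)"
proof -
  have n: "n = Suc (n - 1)" and a: "a = Suc (a - 1)"
    using assms by auto
  have "desc_word a n @ asc_word 1 n = (desc_word a n @ asc_word 1 (a - 1)) @ asc_word (a - 1) n"
    using assms asc_word_split[of 1 "a - 1" n] by simp
  also have "braid_eq n \<dots> ((asc_word 1 (a - 1) @ desc_word a n) @ asc_word (a - 1) n)"
    using assms unfolding asc_word_def desc_word_def
    by (intro braid_eq_append_right braid_eq_pos_words_commute_far) auto
  also have "\<dots> = asc_word 1 (a - 1) @
                   (desc_word (Suc (a - 1)) (Suc (n - 1)) @ asc_word (a - 1) (Suc (n - 1)))"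
    using n a by simp
  also have "braid_eq n \<dots> (asc_word 1 (a - 1) @
                   (asc_word (a - 1) (n - 1) @ desc_word (a - 1) (Suc (n - 1))))"
    using assms braid_eq_desc_asc_word[of "a - 1" "n - 1"] n
    by (intro braid_eq_append_left valid_word_asc_word) auto
  also have "\<dots> = asc_word 1 (n - 1) @ desc_word (a - 1) n"
    using assms asc_word_split[of 1 "a - 1" "n - 1"] n by simp
  finally show ?thesis .
qed

lemma braid_eq_pow_asc_word_peel:
  assumes "t < n"
  shows "braid_eq n (pow_word (asc_word 1 n) t) (pow_word (asc_word 1 (n - 1)) t @ desc_word (n - t) n)"
  using assms
proof (induction t)
  case 0 then show ?case by (simp add: braid_eq.refl)
next
  case (Suc t)
  have "pow_word (asc_word 1 n) (Suc t) = pow_word (asc_word 1 n) t @ asc_word 1 n"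
    by (simp add: pow_word_Suc_right)
  also have "braid_eq n \<dots> ((pow_word (asc_word 1 (n - 1)) t @ desc_word (n - t) n) @ asc_word 1 n)"
    using Suc by (intro braid_eq_append_right) (auto intro: valid_word_asc_word)
  also have "braid_eq n \<dots>
      (pow_word (asc_word 1 (n - 1)) t @ (asc_word 1 (n - 1) @ desc_word (n - t - 1) n))"
    using braid_eq_desc_word_asc_word_1[of "n - t" n] Suc.prems
    by (simp add: braid_eq_append_left valid_word_pow_word valid_word_asc_word)
  also have "\<dots> = pow_word (asc_word 1 (n - 1)) (Suc t) @ desc_word (n - Suc t) n"
    by (simp add: pow_word_Suc_right)
  finally show ?case .
qed

lemma braid_eq_pow_desc_word_pow_asc_word:
  assumes "1 \<le> n"
  shows "braid_eq n (pow_word (desc_word 1 n) n) (pow_word (asc_word 1 n) n)"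
  using assms
proof (induction n rule: dec_induct)
  case base
  then show ?case by (simp add: braid_eq.refl)
next
  case (step n)
  have peel: "braid_eq (Suc n) (pow_word (asc_word 1 (Suc n)) n)
                               (pow_word (asc_word 1 n) n @ desc_word 1 (Suc n))"
    using braid_eq_pow_asc_word_peel[of n "Suc n"] by simp
  have peel_rev: "braid_eq (Suc n) (pow_word (desc_word 1 (Suc n)) n)
                                   (asc_word 1 (Suc n) @ pow_word (desc_word 1 n) n)"
    using braid_eq_rev[OF peel] by (simp add: rev_pow_word)
  have IH: "braid_eq (Suc n) (pow_word (asc_word 1 n) n) (pow_word (desc_word 1 n) n)"
    using braid_eq.sym[OF braid_eq_mono[OF step.IH]] by simp
  have "pow_word (asc_word 1 (Suc n)) (Suc n) = asc_word 1 (Suc n) @ pow_word (asc_word 1 (Suc n)) n"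
    by (simp add: pow_word_Suc)
  also have "braid_eq (Suc n) \<dots>
      (asc_word 1 (Suc n) @ (pow_word (asc_word 1 n) n @ desc_word 1 (Suc n)))"
    using peel by (intro braid_eq_append_left) (auto intro: valid_word_asc_word)
  also have "braid_eq (Suc n) \<dots>
      (asc_word 1 (Suc n) @ (pow_word (desc_word 1 n) n @ desc_word 1 (Suc n)))"
    using IH
    by (intro braid_eq_append_left braid_eq_append_right valid_word_asc_word valid_word_desc_word) auto
  also have "\<dots> = (asc_word 1 (Suc n) @ pow_word (desc_word 1 n) n) @ desc_word 1 (Suc n)"
    by simp
  also have "braid_eq (Suc n) \<dots> (pow_word (desc_word 1 (Suc n)) n @ desc_word 1 (Suc n))"
    using braid_eq.sym[OF peel_rev]
    by (intro braid_eq_append_right) (auto intro: valid_word_desc_word)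
  also have "\<dots> = pow_word (desc_word 1 (Suc n)) (Suc n)"
    by (simp add: pow_word_Suc_right)
  finally show ?case by (rule braid_eq.sym)
qed

section \<open>The staircase\<close>

definition staircase_word :: "nat \<Rightarrow> nat \<Rightarrow> bword" where
  "staircase_word s n = concat (map (\<lambda>k. desc_word (k - s) k) [Suc s..<Suc n])"

lemma staircase_word_self[simp]: "staircase_word s s = []"
  by (simp add: staircase_word_def)

lemma staircase_word_Suc:
  "s \<le> n \<Longrightarrow> staircase_word s (Suc n) = staircase_word s n @ desc_word (Suc n - s) (Suc n)"
  by (simp add: staircase_word_def)

lemma valid_word_staircase_word: "1 \<le> s \<Longrightarrow> n \<le> m \<Longrightarrow> valid_word m (staircase_word s n)"
  unfolding staircase_word_def by (intro valid_word_concat) (auto intro!: valid_word_desc_word)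

lemma braid_eq_pow_asc_word_staircase_word:
  assumes "1 \<le> s" "s \<le> n"
  shows "braid_eq n (pow_word (asc_word 1 n) s) (pow_word (asc_word 1 s) s @ staircase_word s n)"
  using assms(2)
proof (induction n rule: dec_induct)
  case base then show ?case by (simp add: braid_eq.refl valid_word_pow_word valid_word_asc_word)
next
  case (step n)
  have "braid_eq (Suc n) (pow_word (asc_word 1 (Suc n)) s)
                         (pow_word (asc_word 1 n) s @ desc_word (Suc n - s) (Suc n))"
    using braid_eq_pow_asc_word_peel[of s "Suc n"] step by simp
  also have "braid_eq (Suc n) \<dots>
      ((pow_word (asc_word 1 s) s @ staircase_word s n) @ desc_word (Suc n - s) (Suc n))"
    using step assms
    by (intro braid_eq_append_right braid_eq_mono[OF step.IH]) (auto intro: valid_word_desc_word)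
  finally show ?case using step by (simp add: staircase_word_Suc)
qed

lemma braid_eq_gen_desc_word_shift:
  assumes "1 \<le> a" "a \<le> i" "i + 2 \<le> c" "c \<le> n"
  shows "braid_eq n ((i, True) # desc_word a c) (desc_word a c @ [(Suc i, True)])"
proof -
  let ?D = "pos_word (rev [i + 2..<c])"
  have split: "desc_word a c = desc_word (i + 2) c @ [(Suc i, True), (i, True)] @ desc_word a i"
    using assms desc_word_split[of a "i + 2" c] by (simp add: desc_word_Suc)
  have "(i, True) # desc_word a c = ((i, True) # ?D) @ [(Suc i, True), (i, True)] @ desc_word a i"
    using split by (simp add: desc_word_def)
  also have "braid_eq n \<dots> ((?D @ [(i, True)]) @ [(Suc i, True), (i, True)] @ desc_word a i)"
    using assms
    by (intro braid_eq_append_right braid_eq_gen_commute_far) (auto intro: valid_word_desc_word)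
  also have "\<dots> = ?D @ [(i, True), (Suc i, True), (i, True)] @ desc_word a i"
    by simp
  also have "braid_eq n \<dots> (?D @ [(Suc i, True), (i, True), (Suc i, True)] @ desc_word a i)"
    using assms by (intro braid_eq.braid_rel) (auto intro: valid_word_desc_word)
  also have "\<dots> = (?D @ [(Suc i, True), (i, True)]) @ ((Suc i, True) # pos_word (rev [a..<i]))"
    by (simp add: desc_word_def)
  also have "braid_eq n \<dots>
      ((?D @ [(Suc i, True), (i, True)]) @ (pos_word (rev [a..<i]) @ [(Suc i, True)]))"
    using assms by (intro braid_eq_append_left braid_eq_gen_commute_far) auto
  also have "\<dots> = desc_word a c @ [(Suc i, True)]"
    using split by (simp add: desc_word_def)
  finally show ?thesis .
qed

lemma braid_eq_pos_word_desc_word_shift: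
  assumes "1 \<le> a" "\<forall>i\<in>set xs. a \<le> i \<and> i + 2 \<le> c" "c \<le> n"
  shows "braid_eq n (pos_word xs @ desc_word a c) (desc_word a c @ pos_word (map Suc xs))"
  using assms
proof (induction xs)
  case Nil then show ?case by (simp add: braid_eq.refl valid_word_desc_word)
next
  case (Cons i xs)
  have "braid_eq n ([(i, True)] @ (pos_word xs @ desc_word a c))
                   ([(i, True)] @ (desc_word a c @ pos_word (map Suc xs)))"
    using Cons by (intro braid_eq_append_left) auto
  moreover have "braid_eq n (((i, True) # desc_word a c) @ pos_word (map Suc xs))
                            ((desc_word a c @ [(Suc i, True)]) @ pos_word (map Suc xs))"
    using Cons.prems by (intro braid_eq_append_right braid_eq_gen_desc_word_shift) auto
  ultimately show ?case by (auto intro: braid_eq.trans)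
qed

lemma braid_eq_desc_word_staircase_word:
  assumes "1 \<le> s" "s \<le> k"
  shows "braid_eq k (desc_word 1 s @ staircase_word s k)
                    (staircase_word s k @ desc_word (Suc k - s) k)"
  using assms(2)
proof (induction k rule: dec_induct)
  case base
  then show ?case using assms by (simp add: braid_eq.refl valid_word_desc_word)
next
  case (step k)
  let ?D = "pos_word (rev [Suc k - s..<k])"
  have "desc_word 1 s @ staircase_word s (Suc k)
      = (desc_word 1 s @ staircase_word s k) @ desc_word (Suc k - s) (Suc k)"
    using step by (simp add: staircase_word_Suc)
  also have "braid_eq (Suc k) \<dots> ((staircase_word s k @ ?D) @ desc_word (Suc k - s) (Suc k))"
  proof -
    have "braid_eq (Suc k) (desc_word 1 s @ staircase_word s k) (staircase_word s k @ ?D)"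
      using braid_eq_mono[OF step.IH] by (simp add: desc_word_def)
    then show ?thesis
      using assms step.hyps by (intro braid_eq_append_right valid_word_desc_word) auto
  qed
  also have "braid_eq (Suc k) \<dots>
      (staircase_word s k @ (desc_word (Suc k - s) (Suc k) @ pos_word (map Suc (rev [Suc k - s..<k]))))"
    using assms step
    by (simp add: braid_eq_append_left braid_eq_pos_word_desc_word_shift valid_word_staircase_word)
  also have "pos_word (map Suc (rev [Suc k - s..<k])) = desc_word (Suc (Suc k) - s) (Suc k)"
    using assms step by (simp add: desc_word_def rev_map[symmetric] map_Suc_upt Suc_diff_le)
  finally show ?case using step by (simp add: staircase_word_Suc)
qed

text \<open>The last stair is \<open>\<sigma>_n Q\<close> with \<open>Q = \<sigma>_{n-1}\<cdots>\<sigma>_{n+1-s}\<close>: conjugate \<open>Q\<close> to the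
  front, destabilise \<open>\<sigma>_n\<close>, and move \<open>Q\<close> back, where it passes through the staircase
  and becomes \<open>\<delta>_s\<close>.\<close>

lemma closure_staircase_word_destabilise:
  assumes "1 \<le> s" "s \<le> n" "valid_word s \<beta>"
  shows "closure n (\<beta> @ staircase_word s n) = closure s (\<beta> @ pow_word (desc_word 1 s) (n - s))"
  using assms(2,3)
proof (induction n arbitrary: \<beta> rule: dec_induct)
  case base then show ?case by simp
next
  case (step n)
  let ?Q = "desc_word (Suc n - s) n" and ?E = "staircase_word s n"
  have valid: "valid_word n \<beta>" "valid_word n ?Q" "valid_word n ?E"
    using assms step valid_word_mono by (auto intro: valid_word_desc_word valid_word_staircase_word)
  have n_pos: "1 \<le> n"
    using assms step by auto
  have "closure (Suc n) (\<beta> @ staircase_word s (Suc n))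
      = closure (Suc n) ((\<beta> @ ?E @ [(n, True)]) @ ?Q)"
    using step assms by (simp add: staircase_word_Suc desc_word_Suc)
  also have "\<dots> = closure (Suc n) ((?Q @ \<beta> @ ?E) @ [(n, True)])"
    using valid n_pos by (subst closure_append_commute) (auto intro: valid_word_mono)
  also have "\<dots> = closure n (?Q @ \<beta> @ ?E)"
    using valid n_pos by (intro closure_destabilise) auto
  also have "\<dots> = closure n ((\<beta> @ ?E) @ ?Q)"
    using valid by (subst closure_append_commute) auto
  also have "\<dots> = closure n ((\<beta> @ desc_word 1 s) @ ?E)"
  proof -
    have "braid_eq n (\<beta> @ desc_word 1 s @ ?E) (\<beta> @ ?E @ ?Q)"
      using braid_eq_desc_word_staircase_word[of s n] assms step valid
      by (intro braid_eq_append_left) auto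
    then show ?thesis
      by (simp add: closure_eq_if_braid_eq)
  qed
  also have "\<dots> = closure s (\<beta> @ pow_word (desc_word 1 s) (Suc n - s))"
    using step.IH[of "\<beta> @ desc_word 1 s"] step assms
    by (simp add: valid_word_desc_word Suc_diff_le pow_word_Suc)
  finally show ?case .
qed

lemma closure_pow_full_word_swap:
  assumes "0 < s" "s \<le> r" "s dvd r" "valid_word s \<gamma>"
  shows "closure r (\<gamma> @ pow_word (full_word r) s) = closure s (\<gamma> @ pow_word (full_word s) r)"
proof -
  let ?A = "asc_word 1 s" and ?D = "desc_word 1 s"
  obtain m where m: "r - s = s * m"
    using assms by (metis dvd_diff_nat dvd_def dvd_refl)
  have valid: "valid_word r \<gamma>" "valid_word s (\<gamma> @ pow_word ?A s)"
    using assms by (auto intro: valid_word_mono intro!: valid_word_pow_word valid_word_asc_word)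
  have "closure r (\<gamma> @ pow_word (asc_word 1 r) s)
      = closure r ((\<gamma> @ pow_word ?A s) @ staircase_word s r)"
    using braid_eq_pow_asc_word_staircase_word[of s r] assms valid
    by (simp add: closure_eq_if_braid_eq braid_eq_append_left)
  also have "\<dots> = closure s ((\<gamma> @ pow_word ?A s) @ pow_word ?D (r - s))"
    using closure_staircase_word_destabilise[of s r "\<gamma> @ pow_word ?A s"] assms valid by simp
  also have "\<dots> = closure s ((\<gamma> @ pow_word ?A s) @ pow_word ?A (r - s))"
    using braid_eq_pow_word[OF braid_eq_pow_desc_word_pow_asc_word, of s m] assms valid m
    by (simp add: closure_eq_if_braid_eq braid_eq_append_left pow_word_mult)
  also have "\<dots> = closure s (\<gamma> @ pow_word ?A r)"
    using assms by (simp add: pow_word_add[symmetric])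
  finally show ?thesis
    by (simp add: full_word_eq_asc_word)
qed

section \<open>T-links\<close>

lemma sorted_le_last: "sorted xs \<Longrightarrow> x \<in> set xs \<Longrightarrow> x \<le> last xs"
  by (induction xs) (auto simp: last_ConsR)

lemma valid_word_concat_pow_full_word:
  assumes "\<forall>(r, s)\<in>set qs. r \<le> n"
  shows "valid_word n (concat (map (\<lambda>(r, s). pow_word (full_word r) s) qs))"
  using assms
  by (auto intro!: valid_word_concat valid_word_pow_word valid_word_asc_word
      simp: full_word_eq_asc_word)

lemma T_link_swap_last:
  assumes "is_T_data (qs @ [(rk, sk)])" "qs \<noteq> [] \<longrightarrow> fst (last qs) \<le> sk" "sk \<le> rk" "sk dvd rk"
  shows "T_link (qs @ [(rk, sk)]) = T_link (qs @ [(sk, rk)])"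
proof -
  let ?\<gamma> = "concat (map (\<lambda>(r, s). pow_word (full_word r) s) qs)"
  have "r \<le> sk" if "(r, s) \<in> set qs" for r s
  proof -
    have "sorted (map fst qs)"
      using assms(1) by (simp add: is_T_data_def sorted_append)
    then have "r \<le> last (map fst qs)"
      using that by (intro sorted_le_last) force+
    then show ?thesis
      using assms(2) that by (cases "qs = []") (auto simp: last_map)
  qed
  then have "valid_word sk ?\<gamma>"
    by (auto intro: valid_word_concat_pow_full_word)
  moreover have "0 < sk"
    using assms(1) by (simp add: is_T_data_def)
  ultimately show ?thesis
    using assms(3,4) closure_pow_full_word_swap[of sk rk ?\<gamma>] by (simp add: T_link_def)
qed

theorem corollary3p2:
  shows "(\<forall>(a::nat) (s::nat) (r::nat) (\<gamma>::bword).
            0 < a \<longrightarrow> a \<le> s \<longrightarrow> s \<le> r \<longrightarrow> s dvd r \<longrightarrow> valid_word a \<gamma> \<longrightarrow>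
            closure r (\<gamma> @ pow_word (full_word r) s) = closure s (\<gamma> @ pow_word (full_word s) r))
      \<and> (\<forall>(qs::(nat \<times> nat) list) (rk::nat) (sk::nat).
            is_T_data (qs @ [(rk, sk)]) \<longrightarrow> (qs \<noteq> [] \<longrightarrow> fst (last qs) \<le> sk) \<longrightarrow> sk \<le> rk \<longrightarrow>
            sk dvd rk \<longrightarrow> T_link (qs @ [(rk, sk)]) = T_link (qs @ [(sk, rk)]))"
proof (intro conjI allI impI)
  fix a s r :: nat and \<gamma> :: bword
  assume "0 < a" "a \<le> s" "s \<le> r" "s dvd r" "valid_word a \<gamma>"
  then show "closure r (\<gamma> @ pow_word (full_word r) s) = closure s (\<gamma> @ pow_word (full_word s) r)"
    by (intro closure_pow_full_word_swap) (auto intro: valid_word_mono)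
qed (rule T_link_swap_last)

end
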